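(* For every $p\ge 0$, every permutation in the basis $\mathcal{B}_p$ has length $n$ with $p+2\le n\le 2(p+1)$. In particular $\mathcal{B}_p$ is finite.
   Context: A right-jump transforms $\sigma=\sigma_1\cdots\sigma_n$ into $\sigma_1\cdots\sigma_{i-1}\sigma_{i+1}\cdots\sigma_j\sigma_i\sigma_{j+1}\cdots\sigma_n$ for some $1\le i<j\le n$. A permutation $\pi$ of $[k]$ is a pattern of $\sigma$ (written $\pi\prec\sigma$) if some subsequence of $\sigma$ is order-isomorphic to $\pi$. $\mathcal{C}_p$ is the set of all permutations (of any length $n$) obtainable from the identity $12\cdots n$ by at most $p$ right-jumps. The basis $\mathcal{B}_p$ is the set of permutations $\sigma\notin\mathcal{C}_p$ such that every pattern $\pi\prec\sigma$ with $\pi\ne\sigma$ lies in $\mathcal{C}_p$. *)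

theory Defs
  imports Main "HOL-Library.Sublist"
begin

definition is_perm :: "nat list \<Rightarrow> bool" where
  "is_perm xs \<longleftrightarrow> distinct xs \<and> set xs = {1..length xs}"

definition identity_perm :: "nat \<Rightarrow> nat list" where
  "identity_perm n = [1..<n+1]"

text \<open>Right-jump, 0-indexed positions i < j < length xs: the entry at position i
  is removed and reinserted right after the entry originally at position j.\<close>
definition right_jump :: "nat list \<Rightarrow> nat \<Rightarrow> nat \<Rightarrow> nat list" where
  "right_jump xs i j = take i xs @ take (j - i) (drop (Suc i) xs) @ [xs ! i] @ drop (Suc j) xs"

inductive reach :: "nat \<Rightarrow> nat list \<Rightarrow> bool" where
  reach_id: "reach 0 (identity_perm n)"
| reach_step: "reach k xs \<Longrightarrow> i < j \<Longrightarrow> j < length xs \<Longrightarrow> reach (Suc k) (right_jump xs i j)"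

definition Cls :: "nat \<Rightarrow> nat list set" where
  "Cls p = {xs. \<exists>k\<le>p. reach k xs}"

definition order_iso :: "nat list \<Rightarrow> nat list \<Rightarrow> bool" where
  "order_iso a b \<longleftrightarrow> length a = length b \<and>
     (\<forall>i<length a. \<forall>j<length a. (a ! i < a ! j) \<longleftrightarrow> (b ! i < b ! j))"

definition is_pattern :: "nat list \<Rightarrow> nat list \<Rightarrow> bool" where
  "is_pattern \<pi> \<sigma> \<longleftrightarrow> is_perm \<pi> \<and> (\<exists>s. subseq s \<sigma> \<and> order_iso \<pi> s)"

definition basis :: "nat \<Rightarrow> nat list set" where
  "basis p = {\<sigma>. is_perm \<sigma> \<and> \<sigma> \<notin> Cls p \<and>
      (\<forall>\<pi>. is_pattern \<pi> \<sigma> \<and> \<pi> \<noteq> \<sigma> \<longrightarrow> \<pi> \<in> Cls p)}"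

end

theory Submission
  imports Defs
begin

text \<open>Call an entry of a permutation a non-record if some larger entry precedes it.
  A right-jump creates at most one new non-record, and conversely a permutation with
  k > 0 non-records arises by one right-jump from a permutation with k - 1 of them
  (move a non-record y in front of the first entry exceeding y). Hence \<open>\<C>\<^sub>p\<close>
  consists exactly of the permutations with at most p non-records. A basis element
  therefore has at least p + 1 non-records, and since the first entry is a record, at
  least p + 2 entries. If it had more than 2(p + 1) entries, keeping p + 1 non-records
  together with a larger entry preceding each of them would give a proper pattern with
  p + 1 non-records, i.e. a proper pattern outside \<open>\<C>\<^sub>p\<close>.\<close>

text \<open>Counts the entries of xs below the running maximum, which starts at m; for m = 0
  these are the non-records.\<close>
fun non_records :: "nat \<Rightarrow> nat list \<Rightarrow> nat" where
  "non_records m [] = 0"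
| "non_records m (x # xs) = (if x < m then 1 else 0) + non_records (max m x) xs"

lemma non_records_append:
  "non_records m (xs @ ys) = non_records m xs + non_records (foldl max m xs) ys"
  by (induction xs arbitrary: m) auto

lemma non_records_mono: "m \<le> m' \<Longrightarrow> non_records m xs \<le> non_records m' xs"
proof (induction xs arbitrary: m m')
  case (Cons x xs)
  have "non_records (max m x) xs \<le> non_records (max m' x) xs"
    using Cons by simp
  then show ?case using Cons.prems by auto
qed simp

lemma non_records_le_length: "non_records m xs \<le> length xs"
proof (induction xs arbitrary: m)
  case (Cons x xs)
  have "non_records (max m x) xs \<le> length xs" by (rule Cons.IH)
  then show ?case by (simp add: max_def split: if_splits)
qed simp

lemma non_records_eq_0_iff:
  "non_records m xs = 0 \<longleftrightarrow> sorted xs \<and> (\<forall>x\<in>set xs. m \<le> x)"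
  by (induction xs arbitrary: m) (auto simp: max_def not_less)

lemma foldl_max_commute: "foldl max (max m a) xs = max (foldl max m xs) (a :: nat)"
proof (induction xs arbitrary: m)
  case (Cons x xs)
  then show ?case using Cons.IH[of "max m x"] by (simp add: max.left_commute max.commute)
qed simp

lemma foldl_max_ge: "(m :: nat) \<le> foldl max m xs"
proof (induction xs arbitrary: m)
  case (Cons x xs)
  have "max m x \<le> foldl max (max m x) xs" by (rule Cons.IH)
  then show ?case by simp
qed simp

lemma foldl_max_le: "(m :: nat) \<le> y \<Longrightarrow> \<forall>a\<in>set xs. a \<le> y \<Longrightarrow> foldl max m xs \<le> y"
  by (induction xs arbitrary: m) auto

lemma right_jump_append:
  "right_jump (xs @ a # ys @ zs) (length xs) (length xs + length ys) = xs @ ys @ a # zs"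
  by (simp add: right_jump_def)

lemma right_jump_split:
  assumes "i < j" "j < length xs"
  obtains ys a zs us where "xs = ys @ a # zs @ us" "length ys = i" "length zs = j - i"
proof
  show "xs = take i xs @ xs ! i # take (j - i) (drop (Suc i) xs) @ drop (Suc j) xs"
    using assms id_take_nth_drop[of i xs] append_take_drop_id[of "j - i" "drop (Suc i) xs"]
    by (simp add: Suc_diff_le less_imp_le_nat)
qed (use assms in simp_all)

lemma non_records_move_back:
  "non_records m (xs @ a # ys) \<le> Suc (non_records m (a # xs @ ys))"
proof -
  have "non_records m (xs @ a # ys) \<le> non_records m xs + Suc (non_records (max (foldl max m xs) a) ys)"
    by (simp add: non_records_append)
  also have "\<dots> \<le> non_records (max m a) xs + Suc (non_records (foldl max (max m a) xs) ys)"
    using non_records_mono[of m "max m a" xs] by (simp add: foldl_max_commute)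
  also have "\<dots> \<le> Suc (non_records m (a # xs @ ys))"
    by (simp add: non_records_append)
  finally show ?thesis .
qed

lemma non_records_right_jump:
  assumes "i < j" "j < length xs"
  shows "non_records m (right_jump xs i j) \<le> Suc (non_records m xs)"
proof -
  obtain ys a zs us where xs: "xs = ys @ a # zs @ us" "length ys = i" "length zs = j - i"
    using right_jump_split[OF assms] .
  have "right_jump xs i j = ys @ zs @ a # us"
    using right_jump_append[of ys a zs us] xs assms by simp
  then show ?thesis
    using non_records_move_back[of "foldl max m ys" zs a us] by (simp add: xs(1) non_records_append)
qed

lemma reach_imp_non_records_le: "reach k xs \<Longrightarrow> non_records 0 xs \<le> k"
proof (induction rule: reach.induct)
  case (reach_id n)
  then show ?case by (simp add: identity_perm_def non_records_eq_0_iff del: upt_Suc)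
next
  case (reach_step k xs i j)
  then show ?case using non_records_right_jump[of i j xs 0] by simp
qed

lemma non_records_swap:
  assumes "\<forall>a\<in>set xs. a \<le> y" "y < w"
  shows "non_records 0 (xs @ w # ys @ y # zs) = Suc (non_records 0 (xs @ y # w # ys @ zs))"
proof -
  have "foldl max 0 xs \<le> y" using foldl_max_le[of 0 y xs] assms(1) by simp
  moreover have "y < foldl max w ys" using assms(2) foldl_max_ge[of w ys] by simp
  ultimately show ?thesis using assms(2) by (simp add: non_records_append max_def)
qed

lemma non_records_pos_split:
  "0 < non_records m xs \<Longrightarrow> \<exists>ys y zs. xs = ys @ y # zs \<and> (y < m \<or> (\<exists>w\<in>set ys. y < w))"
proof (induction xs arbitrary: m)
  case (Cons x xs)
  show ?case
  proof (cases "x < m")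
    case True then show ?thesis by (intro exI[of _ "[]"]) auto
  next
    case False
    with Cons.prems have "0 < non_records (max m x) xs" by simp
    from Cons.IH[OF this] obtain ys y zs
      where "xs = ys @ y # zs" "y < max m x \<or> (\<exists>w\<in>set ys. y < w)"
      by blast
    then show ?thesis by (intro exI[of _ "x # ys"]) auto
  qed
qed simp

lemma non_records_pos_obtain:
  assumes "0 < non_records 0 xs"
  obtains ys w zs y us where "xs = ys @ w # zs @ y # us" "y < w" "\<forall>a\<in>set ys. a \<le> y"
proof -
  obtain vs y us where xs: "xs = vs @ y # us" and "\<exists>w\<in>set vs. y < w"
    using non_records_pos_split[OF assms] by auto
  then obtain ys w zs where "vs = ys @ w # zs" "y < w" "\<forall>a\<in>set ys. \<not> y < a"
    using split_list_first_prop[of vs "\<lambda>w. y < w"] by blast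
  then show thesis using that xs by (simp add: not_less)
qed

lemma reach_non_records:
  assumes "is_perm xs"
  shows "reach (non_records 0 xs) xs"
  using assms
proof (induction "non_records 0 xs" arbitrary: xs)
  case 0
  then have "sorted xs" "distinct xs" "set xs = {1..length xs}"
    using non_records_eq_0_iff[of 0 xs] by (auto simp: is_perm_def)
  then have "xs = identity_perm (length xs)"
    unfolding identity_perm_def
    by (intro sorted_distinct_set_unique) (simp_all add: atLeastLessThanSuc_atLeastAtMost del: upt_Suc)
  then show ?case using "0.hyps" reach_id by metis
next
  case (Suc k)
  then obtain ys w zs y us where xs: "xs = ys @ w # zs @ y # us" "y < w" "\<forall>a\<in>set ys. a \<le> y"
    by (metis non_records_pos_obtain zero_less_Suc)
  define xs' where "xs' = ys @ y # w # zs @ us"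
  have "non_records 0 xs' = k"
    using Suc.hyps(2) non_records_swap[OF xs(3,2), of zs us] unfolding xs(1) xs'_def by simp
  moreover have "is_perm xs'"
    using Suc.prems unfolding xs(1) xs'_def is_perm_def by auto
  ultimately have "reach k xs'" using Suc.hyps(1) by blast
  then have "reach (Suc k) (right_jump xs' (length ys) (length ys + length (w # zs)))"
    by (rule reach_step) (simp_all add: xs'_def)
  then show ?case
    using Suc.hyps(2) right_jump_append[of ys y "w # zs" us] by (simp add: xs(1) xs'_def)
qed

lemma mem_Cls_iff: "is_perm xs \<Longrightarrow> xs \<in> Cls p \<longleftrightarrow> non_records 0 xs \<le> p"
  unfolding Cls_def using reach_imp_non_records_le reach_non_records le_trans by blast

definition dominated :: "nat list \<Rightarrow> nat set" where
  "dominated xs = {y. \<exists>z>y. subseq [z, y] xs}"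

lemma dominated_subset_set: "dominated xs \<subseteq> set xs"
proof
  fix y assume "y \<in> dominated xs"
  then obtain z where "subseq [z, y] xs" by (auto simp: dominated_def)
  then have "subseq [y] xs" by (rule subseq_Cons')
  then show "y \<in> set xs" by (simp add: subseq_singleton_left)
qed

lemma dominated_Cons: "dominated (x # xs) = {y \<in> set xs. y < x} \<union> dominated xs"
proof (rule set_eqI)
  fix y
  have "y \<in> dominated (x # xs) \<longleftrightarrow> (\<exists>z>y. if z = x then y \<in> set xs else subseq [z, y] xs)"
    by (simp add: dominated_def subseq_singleton_left)
  also have "\<dots> \<longleftrightarrow> (y \<in> set xs \<and> y < x) \<or> y \<in> dominated xs"
    using dominated_subset_set[of xs] unfolding dominated_def by auto
  finally show "y \<in> dominated (x # xs) \<longleftrightarrow> y \<in> {y \<in> set xs. y < x} \<union> dominated xs"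
    by blast
qed

lemma non_records_eq_card:
  "distinct xs \<Longrightarrow> non_records m xs = card ({y \<in> set xs. y < m} \<union> dominated xs)"
proof (induction xs arbitrary: m)
  case (Cons x xs)
  have x: "x \<notin> {y \<in> set xs. y < max m x} \<union> dominated xs"
    using Cons.prems dominated_subset_set by auto
  have "{y \<in> set (x # xs). y < m} \<union> dominated (x # xs)
      = (if x < m then insert x else id) ({y \<in> set xs. y < max m x} \<union> dominated xs)"
    unfolding dominated_Cons by (auto simp: max_def)
  moreover have "finite ({y \<in> set xs. y < max m x} \<union> dominated xs)"
    using dominated_subset_set[of xs] by (simp add: finite_subset)
  ultimately show ?case
    using Cons x by simp
qed (simp add: dominated_def)

lemma non_records_eq_card_dominated: "distinct xs \<Longrightarrow> non_records 0 xs = card (dominated xs)"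
  by (simp add: non_records_eq_card)

lemma exists_short_subseq_non_records:
  assumes "distinct xs" "k \<le> non_records 0 xs"
  shows "\<exists>s. subseq s xs \<and> distinct s \<and> length s \<le> 2 * k \<and> k \<le> non_records 0 s"
proof -
  have "k \<le> card (dominated xs)"
    using assms by (simp add: non_records_eq_card_dominated)
  then obtain J where J: "J \<subseteq> dominated xs" "card J = k" "finite J"
    by (rule obtain_subset_with_card_n)
  then have "\<forall>y\<in>J. \<exists>z. y < z \<and> subseq [z, y] xs"
    by (auto simp: dominated_def)
  then obtain w where w: "\<forall>y\<in>J. y < w y \<and> subseq [w y, y] xs"
    by (metis bchoice)
  define K where "K = J \<union> w ` J"
  define s where "s = filter (\<lambda>v. v \<in> K) xs"
  have "distinct s" unfolding s_def using assms(1) by simp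
  moreover have "length s \<le> 2 * k"
  proof -
    have "length s = card (set s)" using \<open>distinct s\<close> by (simp add: distinct_card)
    also have "\<dots> \<le> card K" unfolding s_def K_def using J(3) by (intro card_mono) auto
    also have "\<dots> \<le> 2 * k"
      unfolding K_def using card_Un_le[of J "w ` J"] card_image_le[OF J(3), of w] J(2) by simp
    finally show ?thesis .
  qed
  moreover have "J \<subseteq> dominated s"
  proof
    fix y assume "y \<in> J"
    then have "subseq (filter (\<lambda>v. v \<in> K) [w y, y]) s"
      using w unfolding s_def by (simp del: filter.simps)
    moreover have "filter (\<lambda>v. v \<in> K) [w y, y] = [w y, y]"
      using \<open>y \<in> J\<close> unfolding K_def by simp
    ultimately show "y \<in> dominated s" using w \<open>y \<in> J\<close> unfolding dominated_def by auto
  qed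
  then have "k \<le> card (dominated s)"
    using J(2) dominated_subset_set[of s] by (metis card_mono finite_set finite_subset)
  moreover have "subseq s xs" unfolding s_def by simp
  ultimately show ?thesis
    using non_records_eq_card_dominated[OF \<open>distinct s\<close>] by auto
qed

definition rank_in :: "nat set \<Rightarrow> nat \<Rightarrow> nat" where
  "rank_in S x = card {y \<in> S. y \<le> x}"

definition standardize :: "nat list \<Rightarrow> nat list" where
  "standardize xs = map (rank_in (set xs)) xs"

lemma strict_mono_on_rank_in: "finite S \<Longrightarrow> strict_mono_on S (rank_in S)"
proof (rule strict_mono_onI)
  fix r s assume "finite S" "r \<in> S" "s \<in> S" "r < s"
  then have "{y \<in> S. y \<le> r} \<subseteq> {y \<in> S. y \<le> s}" "s \<in> {y \<in> S. y \<le> s}"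
    "s \<notin> {y \<in> S. y \<le> r}" by auto
  then have "{y \<in> S. y \<le> r} \<subset> {y \<in> S. y \<le> s}" by blast
  then show "rank_in S r < rank_in S s"
    unfolding rank_in_def using \<open>finite S\<close> by (simp add: psubset_card_mono)
qed

lemma rank_in_mem: "finite S \<Longrightarrow> x \<in> S \<Longrightarrow> rank_in S x \<in> {1..card S}"
  unfolding rank_in_def by (auto simp: Suc_le_eq card_gt_0_iff intro: card_mono)

lemma is_perm_standardize:
  assumes "distinct xs"
  shows "is_perm (standardize xs)"
proof -
  have inj: "inj_on (rank_in (set xs)) (set xs)"
    by (intro strict_mono_on_imp_inj_on strict_mono_on_rank_in) simp
  have "rank_in (set xs) ` set xs \<subseteq> {1..length xs}"
    using rank_in_mem[of "set xs"] distinct_card[OF assms] by auto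
  moreover have "card (rank_in (set xs) ` set xs) = length xs"
    using card_image[OF inj] distinct_card[OF assms] by simp
  ultimately have "rank_in (set xs) ` set xs = {1..length xs}"
    by (simp add: card_subset_eq)
  then show ?thesis
    unfolding is_perm_def standardize_def using assms inj by (simp add: distinct_map)
qed

lemma order_iso_standardize: "order_iso (standardize xs) xs"
  unfolding order_iso_def standardize_def
  using strict_mono_on_less[OF strict_mono_on_rank_in[of "set xs"]] by simp

lemma non_records_map:
  assumes "strict_mono_on (insert m (set xs)) f"
  shows "non_records (f m) (map f xs) = non_records m (xs :: nat list)"
  using assms
proof (induction xs arbitrary: m)
  case (Cons x xs)
  have "f x < f m \<longleftrightarrow> x < m" "f m < f x \<longleftrightarrow> m < x"
    by (rule strict_mono_on_less[OF Cons.prems]; simp)+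
  then have "f x < f m \<longleftrightarrow> x < m" "max (f m) (f x) = f (max m x)"
    by (auto simp: max_def not_le)
  moreover have "strict_mono_on (insert (max m x) (set xs)) f"
    using Cons.prems by (rule monotone_on_subset) (auto simp: max_def)
  ultimately show ?case using Cons.IH by simp
qed simp

lemma non_records_standardize: "non_records 0 (standardize xs) = non_records 0 xs"
proof (cases xs)
  case (Cons x xs')
  have "strict_mono_on (insert x (set xs')) (rank_in (set xs))"
    using strict_mono_on_rank_in[of "set xs"] Cons by simp
  then show ?thesis using Cons non_records_map by (simp add: standardize_def)
qed (simp add: standardize_def)

lemma non_records_0_less_length: "xs \<noteq> [] \<Longrightarrow> non_records 0 xs < length xs"
  by (cases xs) (simp_all add: le_imp_less_Suc non_records_le_length)

lemma basis_length_bounds: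
  assumes "\<sigma> \<in> basis p"
  shows "p + 2 \<le> length \<sigma> \<and> length \<sigma> \<le> 2 * (p + 1)"
proof -
  have perm: "is_perm \<sigma>" and "\<sigma> \<notin> Cls p"
    and minimal: "\<And>\<pi>. is_pattern \<pi> \<sigma> \<Longrightarrow> \<pi> \<noteq> \<sigma> \<Longrightarrow> \<pi> \<in> Cls p"
    using assms unfolding basis_def by auto
  then have many: "p + 1 \<le> non_records 0 \<sigma>" by (simp add: mem_Cls_iff)
  then have "p + 2 \<le> length \<sigma>"
    using non_records_0_less_length[of \<sigma>] by fastforce
  moreover have "length \<sigma> \<le> 2 * (p + 1)"
  proof (rule ccontr)
    assume long: "\<not> length \<sigma> \<le> 2 * (p + 1)"
    obtain s where s: "subseq s \<sigma>" "distinct s" "length s \<le> 2 * (p + 1)" "p + 1 \<le> non_records 0 s"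
      using exists_short_subseq_non_records[OF _ many] perm by (auto simp: is_perm_def)
    have "is_pattern (standardize s) \<sigma>"
      unfolding is_pattern_def using is_perm_standardize[OF s(2)] order_iso_standardize s(1) by blast
    moreover have "standardize s \<noteq> \<sigma>"
      using s(3) long by (auto simp: standardize_def)
    ultimately have "standardize s \<in> Cls p" by (rule minimal)
    then show False
      using s(4) is_perm_standardize[OF s(2)] by (simp add: mem_Cls_iff non_records_standardize)
  qed
  ultimately show ?thesis ..
qed

lemma finite_basis: "finite (basis p)"
proof (rule finite_subset)
  show "basis p \<subseteq> {xs. set xs \<subseteq> {1..2 * (p + 1)} \<and> length xs \<le> 2 * (p + 1)}"
    using basis_length_bounds by (fastforce simp: basis_def is_perm_def)
  show "finite {xs. set xs \<subseteq> {1..2 * (p + 1)} \<and> length xs \<le> 2 * (p + 1)}"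
    by (rule finite_lists_length_le) simp
qed

theorem mainTheorem5:
  fixes p :: nat
  shows "(\<forall>\<sigma>\<in>basis p. p + 2 \<le> length \<sigma> \<and> length \<sigma> \<le> 2 * (p + 1)) \<and> finite (basis p)"
  using basis_length_bounds finite_basis by blast

end
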